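(* Let $\rho\in\mathcal{D}$ be non-singular with $f$ differentiable at $\rho$. If $\rho$ is a minimizer of $f$ on $\mathcal{D}$, then $\rho(\alpha)=\rho$ for all $\alpha\ge0$. If $\rho(\alpha)=\rho$ for some $\alpha>0$, then $\rho$ is a minimizer of $f$ on $\mathcal{D}$.
   Context: $\mathcal{D}=\{\rho\in\mathbb{C}^{d\times d}:\rho\succeq0,\ \operatorname{tr}\rho=1\}$; $f$ is a convex function on $d\times d$ Hermitian matrices; $\nabla f(\rho)$ is its Hermitian gradient w.r.t. $\langle A,B\rangle=\operatorname{tr}(A^{\mathrm H}B)$. $\rho(\alpha):=\exp[\log\rho-\alpha\nabla f(\rho)]/\operatorname{tr}\exp[\log\rho-\alpha\nabla f(\rho)]$ (matrix exponential/logarithm). *)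

theory Defs
  imports "HOL-Analysis.Analysis"
begin

type_synonym 'n cmat = "complex^'n^'n"

definition cadj :: "'n::finite cmat \<Rightarrow> 'n cmat" where
  "cadj A = (\<chi> i j. cnj (A $ j $ i))"

definition hermitian :: "'n::finite cmat \<Rightarrow> bool" where
  "hermitian A \<longleftrightarrow> cadj A = A"

definition qform :: "'n::finite cmat \<Rightarrow> complex^'n \<Rightarrow> complex" where
  "qform A x = (\<Sum>i\<in>UNIV. \<Sum>j\<in>UNIV. cnj (x $ i) * A $ i $ j * x $ j)"

definition psd :: "'n::finite cmat \<Rightarrow> bool" where
  "psd A \<longleftrightarrow> hermitian A \<and> (\<forall>x. Im (qform A x) = 0 \<and> 0 \<le> Re (qform A x))"

definition density :: "'n::finite cmat set" where
  "density = {\<rho>. psd \<rho> \<and> trace \<rho> = 1}"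

primrec mpow :: "'n::finite cmat \<Rightarrow> nat \<Rightarrow> 'n cmat" where
  "mpow A 0 = mat 1"
| "mpow A (Suc k) = A ** mpow A k"

definition mexp :: "'n::finite cmat \<Rightarrow> 'n cmat" where
  "mexp A = (\<Sum>k. (1 / fact k) *\<^sub>R mpow A k)"

text \<open>Matrix logarithm of a positive definite matrix: the unique Hermitian L with exp L = A.\<close>
definition mlog :: "'n::finite cmat \<Rightarrow> 'n cmat" where
  "mlog A = (THE L. hermitian L \<and> mexp L = A)"

definition rho_step :: "'n::finite cmat \<Rightarrow> 'n cmat \<Rightarrow> real \<Rightarrow> 'n cmat" where
  "rho_step G \<rho> \<alpha> = (let E = mexp (mlog \<rho> - \<alpha> *\<^sub>R G) in (\<chi> i j. E $ i $ j / trace E))"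

definition is_gradient :: "('n::finite cmat \<Rightarrow> real) \<Rightarrow> 'n cmat \<Rightarrow> 'n cmat \<Rightarrow> bool" where
  "is_gradient f \<rho> G \<longleftrightarrow> hermitian G \<and>
     (f has_derivative (\<lambda>H. Re (trace (cadj G ** H)))) (at \<rho> within {A. hermitian A})"

definition is_minimizer :: "('n::finite cmat \<Rightarrow> real) \<Rightarrow> 'n cmat \<Rightarrow> bool" where
  "is_minimizer f \<rho> \<longleftrightarrow> \<rho> \<in> density \<and> (\<forall>\<sigma>\<in>density. f \<rho> \<le> f \<sigma>)"

end

theory Submission
  imports Defs
begin

text \<open>Write \<open>\<rho> = U diag(\<lambda>) U\<^sup>H\<close> with all \<open>\<lambda>\<^sub>i > 0\<close>. Since \<open>\<rho>\<close> is nonsingular, the density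
  matrices contain a neighbourhood of \<open>\<rho>\<close> in the affine space of Hermitian unit-trace matrices,
  so \<open>\<rho>\<close> minimizes the convex \<open>f\<close> exactly when \<open>\<nabla>f(\<rho>)\<close> is orthogonal to every traceless
  Hermitian matrix, i.e. when \<open>\<nabla>f(\<rho>)\<close> is a real multiple of the identity. On the other
  hand, the exponential is injective on Hermitian matrices, so the normalized exponential
  \<open>\<rho>(\<alpha>)\<close> equals \<open>\<rho> = exp (log \<rho>)\<close> exactly when \<open>log \<rho> - \<alpha> \<nabla>f(\<rho>)\<close> differs from \<open>log \<rho>\<close> by
  a real multiple of the identity. For \<open>\<alpha> > 0\<close> the two conditions coincide, and a scalar
  gradient fixes \<open>\<rho>\<close> for every \<open>\<alpha>\<close>.

  The spectral theorem is proved by maximizing the Rayleigh quotient on the orthogonal complement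
  of the eigenvectors found so far.\<close>

definition cinner :: "complex^'n::finite \<Rightarrow> complex^'n \<Rightarrow> complex" where
  "cinner x y = (\<Sum>i\<in>UNIV. cnj (x$i) * y$i)"

lemma cinner_add_left: "cinner (x + y) z = cinner x z + cinner y z"
  by (simp add: cinner_def sum.distrib ring_distribs)

lemma cinner_add_right: "cinner z (x + y) = cinner z x + cinner z y"
  by (simp add: cinner_def sum.distrib ring_distribs)

lemma cinner_diff_left: "cinner (x - y) z = cinner x z - cinner y z"
  by (simp add: cinner_def sum_subtractf ring_distribs)

lemma cinner_diff_right: "cinner z (x - y) = cinner z x - cinner z y"
  by (simp add: cinner_def sum_subtractf ring_distribs)

lemma cinner_scale_left: "cinner (c *s x) z = cnj c * cinner x z"
  by (simp add: cinner_def sum_distrib_left mult.assoc)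

lemma cinner_scale_right: "cinner z (c *s x) = c * cinner z x"
  by (simp add: cinner_def sum_distrib_left algebra_simps)

lemma cnj_cinner: "cnj (cinner x y) = cinner y x"
  by (simp add: cinner_def mult.commute)

lemma cinner_zero_right [simp]: "cinner x 0 = 0"
  by (simp add: cinner_def)

lemma cinner_sum_right: "cinner z (sum f S) = (\<Sum>i\<in>S. cinner z (f i))"
  by (induct S rule: infinite_finite_induct) (simp_all add: cinner_add_right)

lemma cinner_axis_right: "cinner y (axis m 1) = cnj (y$m)"
  unfolding cinner_def axis_def by (simp add: if_distrib sum.delta cong: if_cong)

lemma cnj_mult_self: "cnj z * z = complex_of_real ((cmod z)^2)"
  by (subst complex_norm_square) (rule mult.commute)

lemma norm_vec_square: "(norm y)^2 = (\<Sum>i\<in>UNIV. (cmod (y$i))^2)"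
  unfolding norm_vec_def L2_set_def by (subst real_sqrt_pow2) (auto intro: sum_nonneg)

lemma cinner_self: "cinner x x = complex_of_real ((norm x)^2)"
  unfolding cinner_def norm_vec_square of_real_sum by (simp only: cnj_mult_self)

lemma cinner_self_eq_0_iff: "cinner x x = 0 \<longleftrightarrow> x = 0"
  by (simp add: cinner_self)

lemma cinner_matrix_vector_mult_left: "cinner (M *v x) y = cinner x (cadj M *v y)"
proof -
  have "cinner (M *v x) y = (\<Sum>i\<in>UNIV. \<Sum>j\<in>UNIV. cnj (M$i$j) * cnj (x$j) * y$i)"
    by (simp add: cinner_def matrix_vector_mult_def sum_distrib_right)
  also have "\<dots> = (\<Sum>j\<in>UNIV. \<Sum>i\<in>UNIV. cnj (M$i$j) * cnj (x$j) * y$i)"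
    by (rule sum.swap)
  also have "\<dots> = cinner x (cadj M *v y)"
    by (simp add: cinner_def cadj_def matrix_vector_mult_def sum_distrib_left mult_ac)
  finally show ?thesis .
qed

lemma hermitian_cinner_swap: "hermitian A \<Longrightarrow> cinner (A *v x) y = cinner x (A *v y)"
  by (simp add: cinner_matrix_vector_mult_left hermitian_def)

lemma matrix_vector_mult_scale: "A *v (c *s x) = c *s (A *v (x::complex^'n::finite))"
  by (simp add: vec_eq_iff matrix_vector_mult_def sum_distrib_left mult_ac)

lemma norm_vector_scale: "norm (c *s (x::complex^'n::finite)) = cmod c * norm x"
proof -
  have "complex_of_real ((norm (c *s x))^2) = complex_of_real ((cmod c * norm x)^2)"
    by (simp only: cinner_self[symmetric] cinner_scale_left cinner_scale_right)
       (simp add: cinner_self complex_norm_square[symmetric] power_mult_distrib mult.assoc)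
  hence "(norm (c *s x))^2 = (cmod c * norm x)^2" by (simp only: of_real_eq_iff)
  thus ?thesis by (rule power2_eq_imp_eq) auto
qed

lemma qform_eq_cinner: "qform A x = cinner x (A *v x)"
  by (simp add: qform_def cinner_def matrix_vector_mult_def sum_distrib_left mult.assoc)

lemma continuous_on_cinner_right: "continuous_on S (\<lambda>x. cinner z (x::complex^'n::finite))"
  unfolding cinner_def by (intro continuous_intros)

lemma continuous_on_Re_qform: "continuous_on S (\<lambda>x. Re (cinner x (A *v (x::complex^'n::finite))))"
  unfolding cinner_def matrix_vector_mult_def by (intro continuous_intros)

lemma cadj_nth: "cadj A $ i $ j = cnj (A $ j $ i)"
  by (simp add: cadj_def)

lemma cadj_cadj [simp]: "cadj (cadj A) = A"
  by (simp add: vec_eq_iff cadj_nth)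

lemma cadj_add: "cadj (A + B) = cadj A + cadj B"
  by (simp add: vec_eq_iff cadj_nth)

lemma cadj_diff: "cadj (A - B) = cadj A - cadj B"
  by (simp add: vec_eq_iff cadj_nth)

lemma cadj_scaleR: "cadj (t *\<^sub>R A) = t *\<^sub>R cadj A"
  by (simp add: vec_eq_iff cadj_nth)

lemma cadj_matrix_mult: "cadj (A ** B) = cadj B ** cadj (A :: complex^'n::finite^'n)"
  by (simp add: vec_eq_iff cadj_nth matrix_matrix_mult_def cnj_sum mult.commute)

lemma hermitian_add: "hermitian A \<Longrightarrow> hermitian B \<Longrightarrow> hermitian (A + B)"
  by (simp add: hermitian_def cadj_add)

lemma hermitian_diff: "hermitian A \<Longrightarrow> hermitian B \<Longrightarrow> hermitian (A - B)"
  by (simp add: hermitian_def cadj_diff)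

lemma hermitian_scaleR: "hermitian A \<Longrightarrow> hermitian (t *\<^sub>R A)"
  by (simp add: hermitian_def cadj_scaleR)

lemma Im_qform_hermitian: "hermitian A \<Longrightarrow> Im (qform A x) = 0"
  using cnj_cinner[of x "A *v x"] hermitian_cinner_swap[of A x x]
  by (simp add: qform_eq_cinner complex_eq_iff)

lemma matrix_mult_add_right: "(X + Y) ** (Z :: complex^'n::finite^'n) = X ** Z + Y ** Z"
  by (simp add: vec_eq_iff matrix_matrix_mult_def ring_distribs sum.distrib)

lemma matrix_mult_diff_right: "(X - Y) ** (Z :: complex^'n::finite^'n) = X ** Z - Y ** Z"
  by (simp add: vec_eq_iff matrix_matrix_mult_def ring_distribs sum_subtractf)

lemma matrix_mult_diff_left: "Z ** (X - Y) = Z ** X - Z ** (Y :: complex^'n::finite^'n)"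
  by (simp add: vec_eq_iff matrix_matrix_mult_def ring_distribs sum_subtractf)

lemma matrix_mult_scaleR_left: "(c *\<^sub>R X) ** (Y :: complex^'n::finite^'n) = c *\<^sub>R (X ** Y)"
  by (simp add: vec_eq_iff matrix_matrix_mult_def scaleR_sum_right)

lemma matrix_mult_scaleR_right: "X ** (c *\<^sub>R Y :: complex^'n::finite^'n) = c *\<^sub>R (X ** Y)"
  by (simp add: vec_eq_iff matrix_matrix_mult_def scaleR_sum_right)

lemma scaleR_matrix_nth: "(t *\<^sub>R A) $ i $ j = complex_of_real t * (A :: complex^'n::finite^'n) $ i $ j"
proof -
  have "(t *\<^sub>R A) $ i $ j = t *\<^sub>R (A $ i $ j)" by simp
  thus ?thesis by (simp add: scaleR_conv_of_real)
qed

lemma trace_scaleR: "trace (t *\<^sub>R (A::complex^'n::finite^'n)) = t *\<^sub>R trace A"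
  by (simp add: trace_def scaleR_sum_right)

definition diag_mat :: "('n::finite \<Rightarrow> complex) \<Rightarrow> complex^'n^'n" where
  "diag_mat d = (\<chi> i j. if i = j then d i else 0)"

lemma diag_mat_nth: "diag_mat d $ i $ j = (if i = j then d i else 0)"
  by (simp add: diag_mat_def)

lemma matrix_mult_diag_mat_nth: "(X ** diag_mat d) $ i $ j = X $ i $ j * d j"
  unfolding matrix_matrix_mult_def diag_mat_def
  by (simp add: if_distrib sum.delta' cong: if_cong)

lemma diag_mat_matrix_mult_nth: "(diag_mat d ** X) $ i $ j = d i * X $ i $ j"
proof -
  have "(diag_mat d ** X) $ i $ j = (\<Sum>k\<in>UNIV. if i = k then d k * X$k$j else 0)"
    unfolding matrix_matrix_mult_def diag_mat_def vec_lambda_beta by (rule sum.cong) auto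
  thus ?thesis by (simp add: sum.delta)
qed

lemma diag_mat_matrix_vector_mult_nth: "(diag_mat d *v y) $ i = d i * y $ i"
proof -
  have "(diag_mat d *v y) $ i = (\<Sum>j\<in>UNIV. if i = j then d j * y $ j else 0)"
    unfolding matrix_vector_mult_def diag_mat_def vec_lambda_beta by (rule sum.cong) auto
  thus ?thesis by (simp add: sum.delta)
qed

lemma diag_mat_mult: "diag_mat a ** diag_mat b = diag_mat (\<lambda>i. a i * b i)"
  by (simp add: vec_eq_iff matrix_mult_diag_mat_nth diag_mat_nth)

lemma diag_mat_const: "diag_mat (\<lambda>_. k) = mat k"
  by (simp add: vec_eq_iff mat_def diag_mat_nth)

lemma cadj_diag_mat: "cadj (diag_mat d) = diag_mat (\<lambda>i. cnj (d i))"
  by (simp add: vec_eq_iff cadj_nth diag_mat_nth)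

lemma trace_diag_mat: "trace (diag_mat d) = (\<Sum>i\<in>UNIV. d i)"
  by (simp add: trace_def diag_mat_nth)

definition unitary :: "complex^'n::finite^'n \<Rightarrow> bool" where
  "unitary U \<longleftrightarrow> cadj U ** U = mat 1 \<and> U ** cadj U = mat 1"

lemma conj_diag_mat_diff:
  fixes U V :: "complex^'n::finite^'n"
  shows "U ** diag_mat a ** V - U ** diag_mat b ** V = U ** diag_mat (\<lambda>i. a i - b i) ** V"
proof -
  have "diag_mat a - diag_mat b = diag_mat (\<lambda>i. a i - b i)" by (simp add: vec_eq_iff diag_mat_nth)
  thus ?thesis by (metis matrix_mult_diff_left matrix_mult_diff_right)
qed

lemma conj_diag_mat_scaleR:
  fixes U V :: "complex^'n::finite^'n"
  shows "U ** diag_mat (\<lambda>i. complex_of_real (e * a i)) ** V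
           = e *\<^sub>R (U ** diag_mat (\<lambda>i. complex_of_real (a i)) ** V)"
proof -
  have "diag_mat (\<lambda>i. complex_of_real (e * a i)) = e *\<^sub>R diag_mat (\<lambda>i. complex_of_real (a i))"
    by (simp add: vec_eq_iff scaleR_matrix_nth diag_mat_nth del: vector_scaleR_component)
  thus ?thesis by (simp add: matrix_mult_scaleR_left matrix_mult_scaleR_right)
qed

lemma unitary_conj_mat:
  assumes "unitary U"
  shows "U ** mat k ** cadj U = mat k"
proof -
  have "(U ** mat k) $ i $ j = (mat k ** U) $ i $ j" for i j
    using matrix_mult_diag_mat_nth[of U "\<lambda>_. k" i j] diag_mat_matrix_mult_nth[of "\<lambda>_. k" U i j]
    by (simp add: diag_mat_const mult.commute)
  hence "U ** mat k = mat k ** U" by (simp add: vec_eq_iff)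
  hence "U ** mat k ** cadj U = mat k ** (U ** cadj U)" by (simp add: matrix_mul_assoc)
  thus ?thesis using assms by (simp add: unitary_def)
qed

lemma trace_unitary_conj:
  assumes "unitary U"
  shows "trace (U ** D ** cadj U) = trace D"
proof -
  have "trace (U ** D ** cadj U) = trace (cadj U ** (U ** D))" by (rule trace_mul_sym)
  also have "\<dots> = trace D" using assms by (simp add: unitary_def matrix_mul_assoc)
  finally show ?thesis .
qed

lemma hermitian_unitary_conj:
  "hermitian (U ** diag_mat (\<lambda>i. complex_of_real (a i)) ** cadj U)"
  unfolding hermitian_def by (simp add: cadj_matrix_mult cadj_diag_mat matrix_mul_assoc)

section \<open>The spectral theorem for Hermitian matrices\<close>

definition orthonormal_on :: "'n set \<Rightarrow> ('n \<Rightarrow> complex^'n::finite) \<Rightarrow> bool" where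
  "orthonormal_on I v \<longleftrightarrow> (\<forall>i\<in>I. \<forall>j\<in>I. cinner (v i) (v j) = (if i = j then 1 else 0))"

lemma orthonormal_on_proper_subset_imp_orthogonal_vector:
  fixes v :: "'n::finite \<Rightarrow> complex^'n"
  assumes orth: "orthonormal_on I v" and I: "I \<noteq> UNIV"
  shows "\<exists>y. y \<noteq> 0 \<and> (\<forall>i\<in>I. cinner (v i) y = 0)"
proof (rule ccontr)
  assume no_orthogonal: "\<not> ?thesis"
  have expand: "x = (\<Sum>i\<in>I. cinner (v i) x *s v i)" for x
  proof -
    let ?y = "x - (\<Sum>i\<in>I. cinner (v i) x *s v i)"
    have "cinner (v k) ?y = 0" if k: "k \<in> I" for k
    proof -
      have "cinner (v k) (\<Sum>i\<in>I. cinner (v i) x *s v i)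
          = (\<Sum>i\<in>I. cinner (v i) x * (if k = i then 1 else 0))"
        using k orth by (simp add: orthonormal_on_def cinner_sum_right cinner_scale_right)
      also have "\<dots> = cinner (v k) x" using k by (simp add: if_distrib sum.delta cong: if_cong)
      finally show ?thesis by (simp add: cinner_diff_right)
    qed
    hence "?y = 0" using no_orthogonal by blast
    thus ?thesis by simp
  qed
  have coordinate: "1 = (\<Sum>i\<in>I. cnj (v i $ m) * v i $ m)" for m
    using arg_cong[OF expand[of "axis m 1"], of "\<lambda>x. x $ m"] by (simp add: cinner_axis_right)
  have "(of_nat CARD('n) :: complex) = (\<Sum>m\<in>UNIV. \<Sum>i\<in>I. cnj (v i $ m) * v i $ m)"
    using coordinate by simp
  also have "\<dots> = (\<Sum>i\<in>I. cinner (v i) (v i))" by (subst sum.swap) (simp add: cinner_def)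
  also have "\<dots> = of_nat (card I)" using orth by (simp add: orthonormal_on_def)
  finally have "CARD('n) = card I" by (simp only: of_nat_eq_iff)
  moreover have "card I < CARD('n)" using I by (intro psubset_card_mono) auto
  ultimately show False by simp
qed

lemma exists_Rayleigh_maximizer:
  fixes A :: "complex^'n::finite^'n"
  assumes closed: "closed W" and scale: "\<And>c x. x \<in> W \<Longrightarrow> c *s x \<in> W"
    and nonzero: "y \<in> W" "y \<noteq> 0"
  shows "\<exists>x\<in>W. norm x = 1 \<and>
           (\<forall>z\<in>W. Re (cinner z (A *v z)) \<le> Re (cinner x (A *v x)) * (norm z)^2)"
proof -
  have normalize: "complex_of_real (1 / norm z) *s z \<in> W \<inter> sphere 0 1"
    if "z \<in> W" "z \<noteq> 0" for z
    using that by (simp add: scale norm_vector_scale norm_divide)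
  have "compact (W \<inter> sphere 0 1)" using closed by (simp add: closed_Int_compact)
  moreover have "W \<inter> sphere 0 1 \<noteq> {}" using normalize[OF nonzero] by blast
  ultimately obtain x where x: "x \<in> W \<inter> sphere 0 1"
    and max: "\<And>z. z \<in> W \<inter> sphere 0 1 \<Longrightarrow> Re (cinner z (A *v z)) \<le> Re (cinner x (A *v x))"
    using continuous_attains_sup[OF _ _ continuous_on_Re_qform] by metis
  have "Re (cinner z (A *v z)) \<le> Re (cinner x (A *v x)) * (norm z)^2" if z: "z \<in> W" for z
  proof (cases "z = 0")
    case False
    have "Re (cinner z (A *v z)) / (norm z)^2 \<le> Re (cinner x (A *v x))"
      using max[OF normalize[OF z False]]
      by (simp add: matrix_vector_mult_scale cinner_scale_left cinner_scale_right power2_eq_square)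
    thus ?thesis using False by (simp add: field_simps)
  qed simp
  thus ?thesis using x by auto
qed

lemma linear_coeff_eq_0_if_quadratic_nonpos:
  fixes a b :: real
  assumes "\<And>t. t * a + t^2 * b \<le> 0"
  shows "a = 0"
proof (rule ccontr)
  assume a: "a \<noteq> 0"
  define s where "s = 1 / (2 * \<bar>b\<bar> + 2)"
  have s: "s > 0" "s * \<bar>b\<bar> < 1" unfolding s_def by (auto simp: field_simps)
  have "1 + s * b > 0"
    using s mult_left_mono[of "- \<bar>b\<bar>" b s] by linarith
  moreover have "s * a^2 > 0" using s a by simp
  ultimately have "s * a^2 * (1 + s * b) > 0" by simp
  moreover have "(s * a) * a + (s * a)^2 * b \<le> 0" by (rule assms)
  hence "s * a^2 * (1 + s * b) \<le> 0" by (simp add: power2_eq_square algebra_simps)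
  ultimately show False by linarith
qed

text \<open>The quadratic form restricted to \<open>W\<close> is critical at \<open>x\<close> in every direction orthogonal
  to \<open>x\<close>; testing the directions \<open>r\<close> and \<open>\<i> r\<close> for \<open>r = A x - \<mu> x \<in> W\<close> forces \<open>r = 0\<close>.\<close>

lemma Rayleigh_maximizer_eigenvector:
  fixes A :: "complex^'n::finite^'n"
  assumes herm: "hermitian A"
    and add: "\<And>x y. x \<in> W \<Longrightarrow> y \<in> W \<Longrightarrow> x + y \<in> W"
    and scale: "\<And>c x. x \<in> W \<Longrightarrow> c *s x \<in> W"
    and invariant: "\<And>x. x \<in> W \<Longrightarrow> A *v x \<in> W"
    and x: "x \<in> W" "norm x = 1"
    and max: "\<And>z. z \<in> W \<Longrightarrow> Re (cinner z (A *v z)) \<le> Re (cinner x (A *v x)) * (norm z)^2"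
  shows "A *v x = complex_of_real (Re (cinner x (A *v x))) *s x"
proof -
  define \<mu> where "\<mu> = Re (cinner x (A *v x))"
  have xx: "cinner x x = 1" using x by (simp add: cinner_self)
  have critical: "Re (cinner (A *v x) w) = 0" if w: "w \<in> W" "cinner x w = 0" for w
  proof -
    have wx: "cinner w x = 0" using w cnj_cinner[of x w] by simp
    define a where "a = Re (cinner x (A *v w)) + Re (cinner w (A *v x))"
    define b where "b = Re (cinner w (A *v w)) - \<mu> * (norm w)^2"
    have "t * a + t^2 * b \<le> 0" for t :: real
    proof -
      let ?z = "x + complex_of_real t *s w"
      have "cinner ?z (A *v ?z) = cinner x (A *v x) + complex_of_real t * cinner x (A *v w)
          + complex_of_real t * cinner w (A *v x) + complex_of_real (t^2) * cinner w (A *v w)"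
        by (simp add: matrix_vector_right_distrib matrix_vector_mult_scale cinner_add_left
            cinner_add_right cinner_scale_left cinner_scale_right algebra_simps power2_eq_square)
      moreover have "cinner ?z ?z = 1 + complex_of_real (t^2) * cinner w w"
        using xx w(2) wx by (simp add: cinner_add_left cinner_add_right cinner_scale_left
            cinner_scale_right algebra_simps power2_eq_square)
      hence "(norm ?z)^2 = 1 + t^2 * (norm w)^2"
        unfolding cinner_self by (metis of_real_1 of_real_add of_real_mult of_real_eq_iff)
      moreover have "Re (cinner ?z (A *v ?z)) \<le> \<mu> * (norm ?z)^2"
        unfolding \<mu>_def using x w by (intro max add scale)
      ultimately show ?thesis unfolding a_def b_def \<mu>_def by (simp add: algebra_simps)
    qed
    then have "a = 0" by (rule linear_coeff_eq_0_if_quadratic_nonpos)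
    moreover have "Re (cinner w (A *v x)) = Re (cinner (A *v x) w)"
      by (metis cnj_cinner cnj.sel(1))
    ultimately show ?thesis using hermitian_cinner_swap[OF herm, of x w] by (simp add: a_def)
  qed
  define r where "r = A *v x - complex_of_real \<mu> *s x"
  have cnj_\<mu>: "cinner x (A *v x) = complex_of_real \<mu>"
    using hermitian_cinner_swap[OF herm, of x x] cnj_cinner[of x "A *v x"]
    by (simp add: \<mu>_def complex_eq_iff)
  have "r = A *v x + (- complex_of_real \<mu>) *s x" by (simp add: r_def vec_eq_iff)
  hence "r \<in> W" using x(1) by (metis add scale invariant)
  moreover have "cinner x r = 0" using xx cnj_\<mu> by (simp add: r_def cinner_diff_right cinner_scale_right)
  ultimately have r: "r \<in> W" "cinner x r = 0" by blast+
  have "Re (cinner (A *v x) r) = 0" using r by (rule critical)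
  moreover have "Re (cinner (A *v x) (\<i> *s r)) = 0"
    using r by (intro critical scale) (simp_all add: cinner_scale_right)
  ultimately have "cinner (A *v x) r = 0" by (simp add: cinner_scale_right complex_eq_iff)
  hence "cinner r r = 0" using r(2) by (simp add: r_def cinner_diff_left cinner_scale_left)
  thus ?thesis by (simp add: cinner_self_eq_0_iff r_def \<mu>_def)
qed

lemma hermitian_extend_orthonormal_eigenvectors:
  fixes A :: "complex^'n::finite^'n" and v :: "'n \<Rightarrow> complex^'n"
  assumes herm: "hermitian A" and I: "I \<noteq> UNIV" and orth: "orthonormal_on I v"
    and eig: "\<forall>i\<in>I. A *v v i = complex_of_real (l i) *s v i"
  shows "\<exists>x \<mu>. norm x = 1 \<and> (\<forall>i\<in>I. cinner (v i) x = 0) \<and> A *v x = complex_of_real \<mu> *s x"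
proof -
  define W where "W = {x. \<forall>i\<in>I. cinner (v i) x = 0}"
  have add: "x + y \<in> W" if "x \<in> W" "y \<in> W" for x y
    using that by (simp add: W_def cinner_add_right)
  have scale: "c *s x \<in> W" if "x \<in> W" for x c
    using that by (simp add: W_def cinner_scale_right)
  have invariant: "A *v x \<in> W" if x: "x \<in> W" for x
    unfolding W_def
  proof (intro CollectI ballI)
    fix i assume "i \<in> I"
    thus "cinner (v i) (A *v x) = 0"
      using x eig by (simp add: hermitian_cinner_swap[OF herm, symmetric] W_def cinner_scale_left)
  qed
  have "W = (\<Inter>i\<in>I. {x. cinner (v i) x = 0})" by (auto simp: W_def)
  hence "closed W"
    by (simp add: closed_INT closed_Collect_eq continuous_on_cinner_right continuous_on_const)
  moreover obtain y where "y \<in> W" "y \<noteq> 0"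
    using orthonormal_on_proper_subset_imp_orthogonal_vector[OF orth I] by (auto simp: W_def)
  ultimately obtain x where x: "x \<in> W" "norm x = 1"
    and max: "\<And>z. z \<in> W \<Longrightarrow> Re (cinner z (A *v z)) \<le> Re (cinner x (A *v x)) * (norm z)^2"
    using exists_Rayleigh_maximizer[OF _ scale] by metis
  have "A *v x = complex_of_real (Re (cinner x (A *v x))) *s x"
    by (rule Rayleigh_maximizer_eigenvector[OF herm add scale invariant x max])
  thus ?thesis using x by (auto simp: W_def)
qed

lemma hermitian_orthonormal_eigenbasis:
  fixes A :: "complex^'n::finite^'n"
  assumes herm: "hermitian A"
  shows "\<exists>v l. orthonormal_on UNIV v \<and> (\<forall>i. A *v v i = complex_of_real (l i) *s v i)"
proof -
  have "\<exists>v l. orthonormal_on I v \<and> (\<forall>i\<in>I. A *v v i = complex_of_real (l i) *s v i)"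
    for I :: "'n set"
  proof (induct I rule: finite_induct[OF finite])
    case 1
    show ?case by (simp add: orthonormal_on_def)
  next
    case (2 k F)
    then obtain v l where orth: "orthonormal_on F v"
      and eig: "\<forall>i\<in>F. A *v v i = complex_of_real (l i) *s v i" by blast
    have "F \<noteq> UNIV" using 2 by auto
    then obtain x \<mu> where x: "norm x = 1" "\<forall>i\<in>F. cinner (v i) x = 0"
      and eig_x: "A *v x = complex_of_real \<mu> *s x"
      using hermitian_extend_orthonormal_eigenvectors[OF herm _ orth eig] by blast
    have "cinner x x = 1" "\<forall>i\<in>F. cinner x (v i) = 0"
      using x by (simp_all add: cinner_self) (metis cnj_cinner complex_cnj_zero)
    hence "orthonormal_on (insert k F) (v(k := x))"
      using orth \<open>k \<notin> F\<close> x(2) unfolding orthonormal_on_def by auto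
    moreover have "\<forall>i\<in>insert k F. A *v (v(k := x)) i = complex_of_real ((l(k := \<mu>)) i) *s (v(k := x)) i"
      using eig eig_x by simp
    ultimately show ?case by blast
  qed
  from this[of UNIV] show ?thesis by simp
qed

theorem hermitian_unitary_diagonalization:
  fixes A :: "complex^'n::finite^'n"
  assumes "hermitian A"
  shows "\<exists>U l. unitary U \<and> A = U ** diag_mat (\<lambda>i. complex_of_real (l i)) ** cadj U"
proof -
  obtain v :: "'n \<Rightarrow> complex^'n" and l where orth: "orthonormal_on UNIV v"
    and eig: "\<And>i. A *v v i = complex_of_real (l i) *s v i"
    using hermitian_orthonormal_eigenbasis[OF assms] by blast
  define U :: "complex^'n^'n" where "U = (\<chi> i j. v j $ i)"
  have "cadj U ** U = mat 1"
    using orth by (simp add: vec_eq_iff U_def cadj_nth matrix_matrix_mult_def cinner_def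
        orthonormal_on_def mat_def)
  hence unitary: "unitary U" by (simp add: unitary_def matrix_left_right_inverse)
  have "(A ** U) $ i $ j = (U ** diag_mat (\<lambda>i. complex_of_real (l i))) $ i $ j" for i j
  proof -
    have "(A ** U) $ i $ j = (A *v v j) $ i"
      by (simp add: U_def matrix_matrix_mult_def matrix_vector_mult_def)
    thus ?thesis using eig by (simp add: U_def matrix_mult_diag_mat_nth mult.commute)
  qed
  hence "A ** U = U ** diag_mat (\<lambda>i. complex_of_real (l i))" by (simp add: vec_eq_iff)
  hence "A ** (U ** cadj U) = U ** diag_mat (\<lambda>i. complex_of_real (l i)) ** cadj U"
    by (simp add: matrix_mul_assoc)
  thus ?thesis using unitary by (auto simp: unitary_def)
qed

section \<open>Exponential and logarithm of Hermitian matrices\<close>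

lemma mpow_unitary_conj:
  assumes "unitary U"
  shows "mpow (U ** D ** cadj U) k = U ** mpow D k ** cadj U"
proof (induct k)
  case 0
  show ?case using assms by (simp add: unitary_def)
next
  case (Suc k)
  have "mpow (U ** D ** cadj U) (Suc k) = U ** D ** cadj U ** (U ** mpow D k ** cadj U)"
    using Suc by simp
  also have "\<dots> = U ** D ** (cadj U ** U) ** mpow D k ** cadj U" by (simp add: matrix_mul_assoc)
  also have "\<dots> = U ** mpow D (Suc k) ** cadj U"
    using assms by (simp add: unitary_def matrix_mul_assoc)
  finally show ?case .
qed

lemma mpow_diag_mat: "mpow (diag_mat d) k = diag_mat (\<lambda>i. d i ^ k)"
  by (induct k) (simp_all add: diag_mat_const diag_mat_mult)

lemma mexp_series_diag_mat_sums:
  "(\<lambda>k. (1 / fact k) *\<^sub>R mpow (diag_mat d) k) sums diag_mat (\<lambda>i. exp (d i))"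
  unfolding sums_def
proof (intro vec_tendstoI)
  fix i j
  show "((\<lambda>n. (\<Sum>k<n. (1 / fact k) *\<^sub>R mpow (diag_mat d) k) $ i $ j)
          \<longlongrightarrow> diag_mat (\<lambda>i. exp (d i)) $ i $ j) sequentially"
  proof (cases "i = j")
    case True
    have "(\<lambda>n. \<Sum>k<n. d i ^ k /\<^sub>R fact k) \<longlonglongrightarrow> exp (d i)"
      using exp_converges by (simp add: sums_def)
    thus ?thesis using True by (simp add: mpow_diag_mat diag_mat_nth divide_inverse_commute)
  qed (simp add: mpow_diag_mat diag_mat_nth)
qed

lemma bounded_linear_matrix_conj:
  fixes U V :: "complex^'n::finite^'n"
  shows "bounded_linear (\<lambda>X. U ** X ** V)"
proof -
  have "linear (\<lambda>X. U ** X ** V)"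
    by (rule linearI) (simp_all add: matrix_add_ldistrib matrix_mult_add_right
        matrix_mult_scaleR_left matrix_mult_scaleR_right)
  thus ?thesis by (simp add: linear_conv_bounded_linear)
qed

lemma mexp_unitary_conj:
  assumes "unitary U"
  shows "mexp (U ** diag_mat (\<lambda>i. complex_of_real (l i)) ** cadj U)
           = U ** diag_mat (\<lambda>i. complex_of_real (exp (l i))) ** cadj U"
proof -
  let ?D = "diag_mat (\<lambda>i. complex_of_real (l i))"
  have "(\<lambda>k. U ** ((1 / fact k) *\<^sub>R mpow ?D k) ** cadj U)
          sums (U ** diag_mat (\<lambda>i. exp (complex_of_real (l i))) ** cadj U)"
    by (rule bounded_linear.sums[OF bounded_linear_matrix_conj mexp_series_diag_mat_sums])
  moreover have "(\<lambda>k. U ** ((1 / fact k) *\<^sub>R mpow ?D k) ** cadj U)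
                   = (\<lambda>k. (1 / fact k) *\<^sub>R mpow (U ** ?D ** cadj U) k)"
    using assms by (simp add: mpow_unitary_conj matrix_mult_scaleR_left matrix_mult_scaleR_right)
  ultimately show ?thesis unfolding mexp_def by (simp add: sums_unique[symmetric] exp_of_real)
qed

text \<open>The unitary \<open>cadj V ** U\<close> intertwines the two exponentials, hence, entry by entry,
  also the two spectra.\<close>

lemma unitary_conj_exp_inj:
  fixes U V :: "complex^'n::finite^'n" and a b :: "'n \<Rightarrow> real"
  assumes U: "unitary U" and V: "unitary V"
    and eq: "U ** diag_mat (\<lambda>i. complex_of_real (exp (a i))) ** cadj U
             = V ** diag_mat (\<lambda>i. complex_of_real (exp (b i))) ** cadj V"
  shows "U ** diag_mat (\<lambda>i. complex_of_real (a i)) ** cadj U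
           = V ** diag_mat (\<lambda>i. complex_of_real (b i)) ** cadj V"
proof -
  define W where "W = cadj V ** U"
  let ?ea = "diag_mat (\<lambda>i. complex_of_real (exp (a i)))"
  let ?eb = "diag_mat (\<lambda>i. complex_of_real (exp (b i)))"
  have "W ** ?ea = (cadj V ** U) ** ?ea ** (cadj U ** U)"
    using U by (simp add: W_def unitary_def)
  also have "\<dots> = cadj V ** (U ** ?ea ** cadj U) ** U" by (simp add: matrix_mul_assoc)
  also have "\<dots> = cadj V ** (V ** ?eb ** cadj V) ** U" by (simp only: eq)
  also have "\<dots> = (cadj V ** V) ** ?eb ** (cadj V ** U)" by (simp add: matrix_mul_assoc)
  also have "\<dots> = ?eb ** W" using V by (simp add: W_def unitary_def)
  finally have intertwine_exp: "W ** ?ea = ?eb ** W" .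
  have "W $ i $ j * complex_of_real (a j) = complex_of_real (b i) * W $ i $ j" for i j
  proof (cases "W $ i $ j = 0")
    case False
    have "W $ i $ j * complex_of_real (exp (a j)) = complex_of_real (exp (b i)) * W $ i $ j"
      using arg_cong[OF intertwine_exp, of "\<lambda>M. M $ i $ j"]
      by (simp add: matrix_mult_diag_mat_nth diag_mat_matrix_mult_nth)
    hence "a j = b i" using False by (simp add: mult.commute)
    thus ?thesis by (simp add: mult.commute)
  qed simp
  hence intertwine:
    "W ** diag_mat (\<lambda>i. complex_of_real (a i)) = diag_mat (\<lambda>i. complex_of_real (b i)) ** W"
    by (simp add: vec_eq_iff matrix_mult_diag_mat_nth diag_mat_matrix_mult_nth)
  have "V ** W = U" using V by (simp add: W_def unitary_def matrix_mul_assoc)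
  hence "U ** diag_mat (\<lambda>i. complex_of_real (a i)) ** cadj U
      = V ** (W ** diag_mat (\<lambda>i. complex_of_real (a i))) ** cadj U"
    by (simp add: matrix_mul_assoc)
  also have "\<dots> = V ** (diag_mat (\<lambda>i. complex_of_real (b i)) ** W) ** cadj U"
    by (simp only: intertwine)
  also have "\<dots> = V ** diag_mat (\<lambda>i. complex_of_real (b i)) ** cadj V ** (U ** cadj U)"
    by (simp add: W_def matrix_mul_assoc)
  also have "\<dots> = V ** diag_mat (\<lambda>i. complex_of_real (b i)) ** cadj V"
    using U by (simp add: unitary_def)
  finally show ?thesis .
qed

lemma mlog_unitary_conj:
  assumes U: "unitary U" and pos: "\<And>i. l i > 0"
  shows "mlog (U ** diag_mat (\<lambda>i. complex_of_real (l i)) ** cadj U)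
           = U ** diag_mat (\<lambda>i. complex_of_real (ln (l i))) ** cadj U"
  unfolding mlog_def
proof (rule the_equality)
  show "hermitian (U ** diag_mat (\<lambda>i. complex_of_real (ln (l i))) ** cadj U) \<and>
        mexp (U ** diag_mat (\<lambda>i. complex_of_real (ln (l i))) ** cadj U)
          = U ** diag_mat (\<lambda>i. complex_of_real (l i)) ** cadj U"
    using pos by (simp add: hermitian_unitary_conj mexp_unitary_conj[OF U])
next
  fix L
  assume L: "hermitian L \<and> mexp L = U ** diag_mat (\<lambda>i. complex_of_real (l i)) ** cadj U"
  then obtain V b where V: "unitary V"
    and L_eq: "L = V ** diag_mat (\<lambda>i. complex_of_real (b i)) ** cadj V"
    using hermitian_unitary_diagonalization by blast
  have "V ** diag_mat (\<lambda>i. complex_of_real (exp (b i))) ** cadj V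
      = U ** diag_mat (\<lambda>i. complex_of_real (exp (ln (l i)))) ** cadj U"
    using L pos unfolding L_eq by (simp add: mexp_unitary_conj[OF V])
  from unitary_conj_exp_inj[OF V U this]
  show "L = U ** diag_mat (\<lambda>i. complex_of_real (ln (l i))) ** cadj U"
    using L_eq by simp
qed

lemma density_nonsingular_unitary_diagonalization:
  fixes \<rho> :: "complex^'n::finite^'n"
  assumes dens: "\<rho> \<in> density" and nonsing: "det \<rho> \<noteq> 0"
  shows "\<exists>U l. unitary U \<and> (\<forall>i. l i > 0) \<and> \<rho> = U ** diag_mat (\<lambda>i. complex_of_real (l i)) ** cadj U"
proof -
  have psd: "psd \<rho>" using dens by (simp add: density_def)
  hence "hermitian \<rho>" by (simp add: psd_def)
  then obtain U l where U: "unitary U"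
    and rho: "\<rho> = U ** diag_mat (\<lambda>i. complex_of_real (l i)) ** cadj U"
    using hermitian_unitary_diagonalization by blast
  obtain B where B: "B ** \<rho> = mat 1"
    using nonsing invertible_det_nz invertible_left_inverse by blast
  have "l j > 0" for j
  proof -
    define u where "u = (\<chi> i. U $ i $ j)"
    have rho_U: "\<rho> ** U = U ** diag_mat (\<lambda>i. complex_of_real (l i))"
      unfolding rho using U by (simp add: unitary_def matrix_mul_assoc[symmetric])
    have "(\<rho> *v u) $ i = (complex_of_real (l j) *s u) $ i" for i
    proof -
      have "(\<rho> *v u) $ i = (\<rho> ** U) $ i $ j"
        by (simp add: u_def matrix_vector_mult_def matrix_matrix_mult_def)
      thus ?thesis unfolding rho_U by (simp add: matrix_mult_diag_mat_nth u_def mult.commute)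
    qed
    hence eig: "\<rho> *v u = complex_of_real (l j) *s u" by (simp add: vec_eq_iff)
    have "cadj U ** U = mat 1" using U by (simp add: unitary_def)
    from arg_cong[OF this, of "\<lambda>M. M $ j $ j"] have uu: "cinner u u = 1"
      by (simp add: u_def cinner_def matrix_matrix_mult_def cadj_nth mat_def)
    have "qform \<rho> u = complex_of_real (l j)"
      by (simp add: qform_eq_cinner eig cinner_scale_right uu)
    hence "l j \<ge> 0" using psd unfolding psd_def by (metis Re_complex_of_real)
    moreover have "l j \<noteq> 0"
    proof
      assume "l j = 0"
      hence "B *v (\<rho> *v u) = 0" using eig by simp
      hence "u = 0" using B by (simp add: matrix_vector_mul_assoc)
      thus False using uu by simp
    qed
    ultimately show ?thesis by simp
  qed
  thus ?thesis using U rho by blast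
qed

lemma qform_add: "qform (A + B) x = qform A x + qform B x"
  by (simp add: qform_def sum.distrib ring_distribs)

lemma qform_scaleR: "qform (t *\<^sub>R A) x = complex_of_real t * qform A x"
  unfolding qform_def scaleR_matrix_nth by (simp add: sum_distrib_left mult_ac)

lemma Re_qform_unitary_conj_lower_bound:
  fixes U :: "complex^'n::finite^'n"
  assumes U: "unitary U" and m: "\<And>i. m \<le> l i"
  shows "m * (norm x)^2 \<le> Re (qform (U ** diag_mat (\<lambda>i. complex_of_real (l i)) ** cadj U) x)"
proof -
  define y where "y = cadj U *v x"
  have "qform (U ** diag_mat (\<lambda>i. complex_of_real (l i)) ** cadj U) x
      = cinner y (diag_mat (\<lambda>i. complex_of_real (l i)) *v y)"
    using cinner_matrix_vector_mult_left[of "cadj U" x]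
    by (simp add: qform_eq_cinner y_def matrix_vector_mul_assoc matrix_mul_assoc)
  also have "\<dots> = complex_of_real (\<Sum>i\<in>UNIV. l i * (cmod (y$i))^2)"
    unfolding cinner_def diag_mat_matrix_vector_mult_nth of_real_sum
    by (intro sum.cong refl) (simp add: mult.left_commute[of "cnj _"] cnj_mult_self)
  finally have q: "Re (qform (U ** diag_mat (\<lambda>i. complex_of_real (l i)) ** cadj U) x)
                     = (\<Sum>i\<in>UNIV. l i * (cmod (y$i))^2)"
    by simp
  have "cinner y y = cinner x x"
    using U cinner_matrix_vector_mult_left[of "cadj U" x]
    by (simp add: y_def unitary_def matrix_vector_mul_assoc)
  hence "(norm y)^2 = (norm x)^2" by (simp only: cinner_self of_real_eq_iff)
  hence "m * (norm x)^2 = (\<Sum>i\<in>UNIV. m * (cmod (y$i))^2)"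
    by (simp add: sum_distrib_left[symmetric] norm_vec_square)
  also have "\<dots> \<le> (\<Sum>i\<in>UNIV. l i * (cmod (y$i))^2)"
    by (intro sum_mono mult_right_mono m) simp
  finally show ?thesis using q by simp
qed

lemma abs_Re_qform_le:
  "\<bar>Re (qform H x)\<bar> \<le> (\<Sum>i\<in>UNIV. \<Sum>j\<in>UNIV. cmod (H$i$j)) * (norm x)^2"
proof -
  have "\<bar>Re (qform H x)\<bar> \<le> (\<Sum>i\<in>UNIV. \<Sum>j\<in>UNIV. cmod (cnj (x $ i) * H $ i $ j * x $ j))"
    unfolding qform_def by (intro order.trans[OF abs_Re_le_cmod] order.trans[OF norm_sum]
        sum_mono norm_sum)
  also have "\<dots> \<le> (\<Sum>i\<in>UNIV. \<Sum>j\<in>UNIV. cmod (H$i$j) * (norm x)^2)"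
  proof (intro sum_mono)
    fix i j
    have "cmod (x$i) * cmod (H$i$j) * cmod (x$j) \<le> norm x * cmod (H$i$j) * norm x"
      using Finite_Cartesian_Product.norm_nth_le[of x i] Finite_Cartesian_Product.norm_nth_le[of x j]
      by (intro mult_mono) auto
    thus "cmod (cnj (x $ i) * H $ i $ j * x $ j) \<le> cmod (H$i$j) * (norm x)^2"
      by (simp add: norm_mult power2_eq_square mult_ac)
  qed
  also have "\<dots> = (\<Sum>i\<in>UNIV. \<Sum>j\<in>UNIV. cmod (H$i$j)) * (norm x)^2"
    by (simp add: sum_distrib_right)
  finally show ?thesis .
qed

text \<open>The smallest eigenvalue of \<open>\<rho>\<close> bounds its quadratic form from below and absorbs the
  perturbation \<open>t H\<close> as long as \<open>\<bar>t\<bar>\<close> times the entrywise \<open>\<ell>\<^sub>1\<close> norm of \<open>H\<close> stays below it.\<close>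

lemma density_perturbation:
  fixes \<rho> H :: "complex^'n::finite^'n"
  assumes dens: "\<rho> \<in> density" and nonsing: "det \<rho> \<noteq> 0"
    and herm: "hermitian H" and traceless: "trace H = 0"
  shows "\<exists>\<delta>>0. \<forall>t. \<bar>t\<bar> < \<delta> \<longrightarrow> \<rho> + t *\<^sub>R H \<in> density"
proof -
  obtain U l where U: "unitary U" and pos: "\<forall>i. l i > 0"
    and rho: "\<rho> = U ** diag_mat (\<lambda>i. complex_of_real (l i)) ** cadj U"
    using density_nonsingular_unitary_diagonalization[OF dens nonsing] by blast
  define m where "m = Min (range l)"
  have m: "m > 0" "\<And>i. m \<le> l i" unfolding m_def using pos by auto
  define K where "K = (\<Sum>i\<in>UNIV. \<Sum>j\<in>UNIV. cmod (H$i$j))"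
  have K: "K \<ge> 0" unfolding K_def by (intro sum_nonneg) auto
  have "\<rho> + t *\<^sub>R H \<in> density" if t: "\<bar>t\<bar> < m / (K + 1)" for t
  proof -
    have "\<bar>t\<bar> * K \<le> m"
      using t K m(1) mult_left_mono[of K "K + 1" "\<bar>t\<bar>"] by (simp add: field_simps)
    have "0 \<le> Re (qform (\<rho> + t *\<^sub>R H) x)" for x
    proof -
      have "\<bar>t * Re (qform H x)\<bar> \<le> \<bar>t\<bar> * (K * (norm x)^2)"
        unfolding abs_mult K_def by (intro mult_left_mono abs_Re_qform_le) simp
      also have "\<dots> \<le> m * (norm x)^2"
        using \<open>\<bar>t\<bar> * K \<le> m\<close> by (simp add: mult.assoc[symmetric] mult_right_mono)
      also have "\<dots> \<le> Re (qform \<rho> x)"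
        unfolding rho by (rule Re_qform_unitary_conj_lower_bound[OF U m(2)])
      finally show ?thesis by (simp add: qform_add qform_scaleR)
    qed
    moreover have "hermitian (\<rho> + t *\<^sub>R H)"
      unfolding rho using herm by (intro hermitian_add hermitian_scaleR hermitian_unitary_conj)
    moreover have "trace (\<rho> + t *\<^sub>R H) = 1"
      using dens traceless by (simp add: density_def trace_add trace_scaleR)
    ultimately show ?thesis by (simp add: density_def psd_def Im_qform_hermitian)
  qed
  moreover have "m / (K + 1) > 0" using m K by simp
  ultimately show ?thesis by blast
qed

section \<open>First-order optimality on the density matrices\<close>

lemma has_real_derivative_along_line_gradient:
  fixes \<rho> H G :: "complex^'n::finite^'n"
  assumes herm_\<rho>: "hermitian \<rho>" and herm_H: "hermitian H" and grad: "is_gradient f \<rho> G"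
  shows "((\<lambda>t. f (\<rho> + t *\<^sub>R H)) has_real_derivative Re (trace (G ** H))) (at 0)"
proof -
  have line: "((\<lambda>t::real. \<rho> + t *\<^sub>R H) has_derivative (\<lambda>t. t *\<^sub>R H)) (at 0)"
    by (auto intro!: derivative_eq_intros)
  have "range (\<lambda>t::real. \<rho> + t *\<^sub>R H) \<subseteq> {A. hermitian A}"
    using herm_\<rho> herm_H by (auto intro: hermitian_add hermitian_scaleR)
  hence "(f has_derivative (\<lambda>X. Re (trace (G ** X))))
           (at ((\<lambda>t::real. \<rho> + t *\<^sub>R H) 0) within range (\<lambda>t::real. \<rho> + t *\<^sub>R H))"
    using grad by (auto simp: is_gradient_def hermitian_def intro: has_derivative_subset)
  from has_derivative_in_compose[OF line this]
  have "((\<lambda>t. f (\<rho> + t *\<^sub>R H)) has_derivative (\<lambda>t. Re (trace (G ** (t *\<^sub>R H))))) (at 0)"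
    by simp
  moreover have "(\<lambda>t. Re (trace (G ** (t *\<^sub>R H)))) = (*) (Re (trace (G ** H)))"
    by (simp add: fun_eq_iff matrix_mult_scaleR_right trace_scaleR mult.commute)
  ultimately show ?thesis by (simp add: has_field_derivative_def)
qed

lemma minimizer_gradient_orthogonal_traceless:
  fixes \<rho> H G :: "complex^'n::finite^'n"
  assumes grad: "is_gradient f \<rho> G" and min: "is_minimizer f \<rho>" and nonsing: "det \<rho> \<noteq> 0"
    and herm: "hermitian H" and traceless: "trace H = 0"
  shows "Re (trace (G ** H)) = 0"
proof -
  have dens: "\<rho> \<in> density" using min by (simp add: is_minimizer_def)
  obtain \<delta> where "\<delta> > 0" and perturb: "\<And>t. \<bar>t\<bar> < \<delta> \<Longrightarrow> \<rho> + t *\<^sub>R H \<in> density"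
    using density_perturbation[OF dens nonsing herm traceless] by blast
  have "hermitian \<rho>" using dens by (simp add: density_def psd_def)
  from has_real_derivative_along_line_gradient[OF this herm grad] show ?thesis
  proof (rule DERIV_local_min)
    show "\<forall>t. \<bar>0 - t\<bar> < \<delta> \<longrightarrow> f (\<rho> + 0 *\<^sub>R H) \<le> f (\<rho> + t *\<^sub>R H)"
      using min perturb by (simp add: is_minimizer_def)
  qed (fact \<open>\<delta> > 0\<close>)
qed

definition elem_mat :: "'n::finite \<Rightarrow> 'n \<Rightarrow> complex \<Rightarrow> complex^'n^'n" where
  "elem_mat i j c = (\<chi> a b. if a = i \<and> b = j then c else 0)"

lemma cadj_elem_mat: "cadj (elem_mat i j c) = elem_mat j i (cnj c)"
  by (auto simp: vec_eq_iff cadj_nth elem_mat_def)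

lemma trace_elem_mat: "trace (elem_mat i j c) = (if i = j then c else 0)"
  by (auto simp: trace_def elem_mat_def intro: sum.neutral)

lemma trace_mult_elem_mat: "trace (G ** elem_mat i j c) = c * G $ j $ i"
proof -
  have "(G ** elem_mat i j c) $ a $ a = (if a = j then c * G $ j $ i else 0)" for a
    unfolding matrix_matrix_mult_def elem_mat_def by (simp add: if_distrib sum.delta cong: if_cong)
  thus ?thesis by (simp add: trace_def sum.delta)
qed

lemma hermitian_orthogonal_traceless_imp_scalar:
  fixes G :: "complex^'n::finite^'n"
  assumes herm: "hermitian G"
    and orth: "\<And>H. hermitian H \<Longrightarrow> trace H = 0 \<Longrightarrow> Re (trace (G ** H)) = 0"
  shows "\<exists>c::real. G = mat (complex_of_real c)"
proof -
  have G_cnj: "G $ j $ i = cnj (G $ i $ j)" for i j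
    using herm unfolding hermitian_def by (metis cadj_nth)
  have herm_pair: "hermitian (elem_mat i j a + elem_mat j i (cnj a))" for i j a
    by (simp add: hermitian_def cadj_add cadj_elem_mat add.commute)
  have off_diagonal: "G $ i $ j = 0" if ij: "i \<noteq> j" for i j
  proof -
    have "Re (trace (G ** (elem_mat i j a + elem_mat j i (cnj a)))) = 0" for a
      using ij by (intro orth herm_pair) (simp add: trace_add trace_elem_mat)
    from this[of 1] this[of \<i>] show ?thesis using G_cnj[of i j]
      by (simp add: matrix_add_ldistrib trace_add trace_mult_elem_mat complex_eq_iff)
  qed
  have diagonal: "G $ i $ i = complex_of_real (Re (G $ j $ j))" for i j
  proof -
    have "hermitian (elem_mat i i 1 + elem_mat j j (-1))"
      by (simp add: hermitian_def cadj_add cadj_elem_mat)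
    hence "Re (trace (G ** (elem_mat i i 1 + elem_mat j j (-1)))) = 0"
      by (rule orth) (simp add: trace_add trace_elem_mat)
    thus ?thesis using G_cnj[of i i] G_cnj[of j j]
      by (simp add: matrix_add_ldistrib trace_add trace_mult_elem_mat complex_eq_iff)
  qed
  have "G = mat (complex_of_real (Re (G $ undefined $ undefined)))"
    using off_diagonal diagonal by (auto simp: vec_eq_iff mat_def)
  thus ?thesis by blast
qed

text \<open>A scalar gradient is orthogonal to every direction \<open>\<sigma> - \<rho>\<close> inside the density matrices, and
  a convex function lies above its tangent line.\<close>

lemma scalar_gradient_imp_minimizer:
  fixes \<rho> G :: "complex^'n::finite^'n"
  assumes convex: "convex_on {A. hermitian A} f" and grad: "is_gradient f \<rho> G"
    and dens: "\<rho> \<in> density" and scalar: "G = mat (complex_of_real c)"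
  shows "is_minimizer f \<rho>"
  unfolding is_minimizer_def
proof (intro conjI ballI)
  fix \<sigma> :: "complex^'n^'n" assume \<sigma>: "\<sigma> \<in> density"
  define D where "D = \<sigma> - \<rho>"
  have herm_\<rho>: "hermitian \<rho>" using dens by (simp add: density_def psd_def)
  have herm_D: "hermitian D" unfolding D_def using \<sigma> herm_\<rho>
    by (intro hermitian_diff) (simp_all add: density_def psd_def)
  define g where "g = (\<lambda>t::real. f (\<rho> + t *\<^sub>R D))"
  have "convex_on UNIV g"
  proof (rule convex_onI)
    fix t x y :: real assume t: "t > 0" "t < 1"
    have "\<rho> + ((1 - t) *\<^sub>R x + t *\<^sub>R y) *\<^sub>R D = (1 - t) *\<^sub>R (\<rho> + x *\<^sub>R D) + t *\<^sub>R (\<rho> + y *\<^sub>R D)"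
      by (simp add: algebra_simps)
    thus "g ((1 - t) *\<^sub>R x + t *\<^sub>R y) \<le> (1 - t) * g x + t * g y"
      unfolding g_def using t herm_\<rho> herm_D
      by (simp only:) (intro convex_onD[OF convex]; auto intro: hermitian_add hermitian_scaleR)
  qed simp
  moreover have "(g has_real_derivative Re (trace (G ** D))) (at 0)"
    unfolding g_def by (rule has_real_derivative_along_line_gradient[OF herm_\<rho> herm_D grad])
  ultimately have "g 1 - g 0 \<ge> Re (trace (G ** D)) * (1 - 0)"
    by (intro convex_on_imp_above_tangent) simp_all
  moreover have "trace D = 0" using \<sigma> dens by (simp add: D_def trace_sub density_def)
  hence "trace (G ** D) = 0"
    by (simp add: scalar trace_def diag_mat_const[symmetric] diag_mat_matrix_mult_nth
        sum_distrib_left[symmetric])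
  ultimately show "f \<rho> \<le> f \<sigma>" by (simp add: g_def D_def)
qed (fact dens)

section \<open>Fixed points of the matrix exponentiated gradient step\<close>

lemma scaleR_mat_of_real:
  "t *\<^sub>R mat (complex_of_real c) = (mat (complex_of_real (t * c)) :: complex^'n::finite^'n)"
  by (simp add: vec_eq_iff mat_def scaleR_matrix_nth del: vector_scaleR_component)

lemma rho_step_fixed_iff_scalar:
  fixes \<rho> G :: "complex^'n::finite^'n"
  assumes dens: "\<rho> \<in> density" and nonsing: "det \<rho> \<noteq> 0" and herm: "hermitian G"
  shows "rho_step G \<rho> \<alpha> = \<rho> \<longleftrightarrow> (\<exists>c::real. \<alpha> *\<^sub>R G = mat (complex_of_real c))"
proof -
  obtain U l where U: "unitary U" and pos: "\<forall>i. l i > 0"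
    and rho: "\<rho> = U ** diag_mat (\<lambda>i. complex_of_real (l i)) ** cadj U"
    using density_nonsingular_unitary_diagonalization[OF dens nonsing] by blast
  have shift: "mlog \<rho> - mat (complex_of_real c)
                 = U ** diag_mat (\<lambda>i. complex_of_real (ln (l i) - c)) ** cadj U" for c
  proof -
    have "mlog \<rho> - mat (complex_of_real c) = U ** diag_mat (\<lambda>i. complex_of_real (ln (l i))) ** cadj U
            - U ** diag_mat (\<lambda>_. complex_of_real c) ** cadj U"
      unfolding rho mlog_unitary_conj[OF U pos[rule_format]] diag_mat_const unitary_conj_mat[OF U] ..
    thus ?thesis by (simp add: conj_diag_mat_diff)
  qed
  define E where "E = mexp (mlog \<rho> - \<alpha> *\<^sub>R G)"
  have step: "rho_step G \<rho> \<alpha> = (\<chi> i j. E $ i $ j / trace E)"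
    by (simp add: rho_step_def E_def Let_def)
  show ?thesis
  proof
    assume fixed: "rho_step G \<rho> \<alpha> = \<rho>"
    have "hermitian (mlog \<rho> - \<alpha> *\<^sub>R G)" unfolding rho mlog_unitary_conj[OF U pos[rule_format]]
      by (intro hermitian_diff hermitian_unitary_conj hermitian_scaleR herm)
    then obtain V b where V: "unitary V"
      and V_eq: "mlog \<rho> - \<alpha> *\<^sub>R G = V ** diag_mat (\<lambda>i. complex_of_real (b i)) ** cadj V"
      using hermitian_unitary_diagonalization by blast
    have E_V: "E = V ** diag_mat (\<lambda>i. complex_of_real (exp (b i))) ** cadj V"
      unfolding E_def V_eq by (rule mexp_unitary_conj[OF V])
    define s where "s = (\<Sum>i\<in>UNIV. exp (b i))"
    have "s > 0" unfolding s_def by (intro sum_pos) auto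
    have "trace E = complex_of_real s"
      unfolding E_V trace_unitary_conj[OF V] trace_diag_mat s_def by simp
    hence "E = s *\<^sub>R \<rho>"
      using fixed \<open>s > 0\<close>
      by (simp add: step vec_eq_iff scaleR_matrix_nth field_simps del: vector_scaleR_component)
    also have "\<dots> = U ** diag_mat (\<lambda>i. complex_of_real (exp (ln (l i) - (- ln s)))) ** cadj U"
    proof -
      have "exp (ln (l i) - (- ln s)) = s * l i" for i
        using pos \<open>s > 0\<close> by (simp add: exp_add mult.commute)
      thus ?thesis unfolding rho by (simp only: conj_diag_mat_scaleR)
    qed
    finally have "mlog \<rho> - \<alpha> *\<^sub>R G = mlog \<rho> - mat (complex_of_real (- ln s))"
      unfolding E_V V_eq shift by (rule unitary_conj_exp_inj[OF V U])
    thus "\<exists>c. \<alpha> *\<^sub>R G = mat (complex_of_real c)" by (intro exI[of _ "- ln s"]) simp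
  next
    assume "\<exists>c. \<alpha> *\<^sub>R G = mat (complex_of_real c)"
    then obtain c where c: "\<alpha> *\<^sub>R G = mat (complex_of_real c)" ..
    have "E = U ** diag_mat (\<lambda>i. complex_of_real (exp (ln (l i) - c))) ** cadj U"
      unfolding E_def c shift by (rule mexp_unitary_conj[OF U])
    also have "\<dots> = exp (- c) *\<^sub>R \<rho>"
      using pos unfolding rho conj_diag_mat_scaleR[symmetric] by (simp add: exp_diff exp_minus field_simps)
    finally have E: "E = exp (- c) *\<^sub>R \<rho>" .
    moreover have "trace E = complex_of_real (exp (- c))"
      using dens unfolding E trace_scaleR by (simp add: density_def scaleR_conv_of_real)
    ultimately show "rho_step G \<rho> \<alpha> = \<rho>"
      by (simp add: step vec_eq_iff scaleR_matrix_nth del: vector_scaleR_component)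
  qed
qed

theorem lemma6:
  fixes f :: "complex^'n::finite^'n \<Rightarrow> real" and \<rho> G :: "complex^'n^'n"
  assumes convex: "convex_on {A. hermitian A} f"
    and dens: "\<rho> \<in> density"
    and nonsing: "det \<rho> \<noteq> 0"
    and grad: "is_gradient f \<rho> G"
  shows "(is_minimizer f \<rho> \<longrightarrow> (\<forall>\<alpha>\<ge>0. rho_step G \<rho> \<alpha> = \<rho>))
       \<and> ((\<exists>\<alpha>>0. rho_step G \<rho> \<alpha> = \<rho>) \<longrightarrow> is_minimizer f \<rho>)"
proof -
  have herm: "hermitian G" using grad by (simp add: is_gradient_def)
  note fixed_iff = rho_step_fixed_iff_scalar[OF dens nonsing herm]
  have "rho_step G \<rho> \<alpha> = \<rho>" if min: "is_minimizer f \<rho>" for \<alpha>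
  proof -
    obtain c where "G = mat (complex_of_real c)"
      using hermitian_orthogonal_traceless_imp_scalar[OF herm]
        minimizer_gradient_orthogonal_traceless[OF grad min nonsing] by blast
    thus ?thesis using fixed_iff scaleR_mat_of_real by blast
  qed
  moreover have "is_minimizer f \<rho>" if fixed: "\<exists>\<alpha>>0. rho_step G \<rho> \<alpha> = \<rho>"
  proof -
    obtain \<alpha> c where "\<alpha> > 0" and c: "\<alpha> *\<^sub>R G = mat (complex_of_real c)"
      using fixed fixed_iff by blast
    have "G = inverse \<alpha> *\<^sub>R (\<alpha> *\<^sub>R G)" using \<open>\<alpha> > 0\<close> by simp
    also have "\<dots> = mat (complex_of_real (c / \<alpha>))"
      unfolding c scaleR_mat_of_real by (simp add: divide_inverse mult.commute)
    finally show ?thesis by (rule scalar_gradient_imp_minimizer[OF convex grad dens])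
  qed
  ultimately show ?thesis by blast
qed

end
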